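(* Let $N=(V,E,c,K)$ be a network with killing, let $o\in V$, and let $X=(X_n)_{n\geq0}$ be the random walk on $N$ started at $X_0=o$. Suppose that \[ \lim_{n\to\infty}\frac{\log\sup_{u\in V}p_n(u,o)}{\log n}=-\infty . \] Then almost surely \[ \lim_{n\to\infty}\frac{\log p_n(X_n,X_0)}{\log\mathbb{G}(X_n,X_0)}=1, \] with the convention that the ratio equals $1$ when $X_n=\dagger$.
   Context: A network with killing is $N=(V,E,c,K)$ where $(V,E)$ is a graph, $c:E\to(0,\infty)$ are conductances and $K:V\to[0,\infty)$ is a killing function. With $c(u)$ the total conductance of oriented edges emanating from $u$ and $c(u,v)$ the total conductance of oriented edges from $u$ to $v$, the random walk on $N$ is the Markov chain on $V\cup\{\dagger\}$ with $P(u,v)=c(u,v)/(c(u)+K(u))$ and $P(u,\dagger)=K(u)/(c(u)+K(u))$ for $u,v\in V$, and $P(\dagger,\dagger)=1$. Write $p_n(u,v)=P^n(u,v)$ and $\mathbb{G}(u,v)=\sum_{n\geq0}p_n(u,v)$. *)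

theory Defs
  imports "HOL-Probability.Probability"
begin

text \<open>A network with killing is encoded by a conductance function c (c u v = total
  conductance of oriented edges from u to v; 0 iff there is no edge) and a killing
  function K. The cemetery state is None; vertices are Some u.\<close>

definition network_with_killing :: "('v \<Rightarrow> 'v \<Rightarrow> real) \<Rightarrow> ('v \<Rightarrow> real) \<Rightarrow> bool" where
  "network_with_killing c K \<longleftrightarrow>
     (\<forall>u v. 0 \<le> c u v \<and> c u v = c v u) \<and>
     (\<forall>u. c u summable_on UNIV) \<and>
     (\<forall>u. 0 \<le> K u) \<and>
     (\<forall>u. 0 < (\<Sum>\<^sub>\<infinity>v. c u v) + K u)"

definition tot_cond :: "('v \<Rightarrow> 'v \<Rightarrow> real) \<Rightarrow> 'v \<Rightarrow> real" where
  "tot_cond c u = (\<Sum>\<^sub>\<infinity>v. c u v)"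

definition trans_prob :: "('v \<Rightarrow> 'v \<Rightarrow> real) \<Rightarrow> ('v \<Rightarrow> real) \<Rightarrow> 'v option \<Rightarrow> 'v option \<Rightarrow> real" where
  "trans_prob c K x y = (case x of
      None \<Rightarrow> (if y = None then 1 else 0)
    | Some u \<Rightarrow> (case y of
         None \<Rightarrow> K u / (tot_cond c u + K u)
       | Some v \<Rightarrow> c u v / (tot_cond c u + K u)))"

fun pn :: "('v \<Rightarrow> 'v \<Rightarrow> real) \<Rightarrow> ('v \<Rightarrow> real) \<Rightarrow> nat \<Rightarrow> 'v option \<Rightarrow> 'v option \<Rightarrow> real" where
  "pn c K 0 x y = (if x = y then 1 else 0)"
| "pn c K (Suc n) x y = (\<Sum>\<^sub>\<infinity>z. trans_prob c K x z * pn c K n z y)"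

definition green :: "('v \<Rightarrow> 'v \<Rightarrow> real) \<Rightarrow> ('v \<Rightarrow> real) \<Rightarrow> 'v option \<Rightarrow> 'v option \<Rightarrow> real" where
  "green c K x y = (\<Sum>n. pn c K n x y)"

definition ext_ln :: "real \<Rightarrow> ereal" where
  "ext_ln x = (if x \<le> 0 then -\<infinity> else ereal (ln x))"

definition is_random_walk ::
  "('v \<Rightarrow> 'v \<Rightarrow> real) \<Rightarrow> ('v \<Rightarrow> real) \<Rightarrow> 'v \<Rightarrow> 'a measure \<Rightarrow> (nat \<Rightarrow> 'a \<Rightarrow> 'v option) \<Rightarrow> bool" where
  "is_random_walk c K r M X \<longleftrightarrow>
     prob_space M \<and>
     (\<forall>n. X n \<in> measurable M (count_space UNIV)) \<and>
     (\<forall>n xs. length xs = Suc n \<longrightarrow>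
        measure M {\<omega> \<in> space M. \<forall>i\<le>n. X i \<omega> = xs ! i}
        = (if xs ! 0 = Some r then 1 else 0) * (\<Prod>i<n. trans_prob c K (xs ! i) (xs ! Suc i)))"

end

theory Submission
  imports Defs
begin

(* Write q_n(u) = p_n(u,r) and pi(u) = c(u) + K(u). Reversibility gives
   P(X_n = u) = pi(u)/pi(r) q_n(u). Averaging the laws of X_m with the summable weights
   1/(m+1)^2 produces a finite measure, so by Borel-Cantelli, almost surely for all large n
   the current state u = X_n satisfies q_n(u) > 0 and
   H(u) := sum_m q_m(u)/(m+1)^2 <= (n+1)^2 q_n(u).
   For such u the termwise bound q_m <= x^2 q_m/(m+1)^2 + (m+1)^k q_m/x^k splits
   G(u,r) = sum_m q_m(u) into x^2 H(u) plus a sum that the superpolynomial decay of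
   sup_u q_m(u) bounds uniformly in u. With x = q_n(u)^(-1/(k+2)) this gives
   ln G(u,r) <= (1 - 5/k) ln q_n(u), while q_n(u) <= G(u,r) gives the reverse inequality;
   as k is arbitrary, the ratio of the logarithms tends to 1. *)

section \<open>Countable additivity and a Borel-Cantelli estimate\<close>

lemma has_sum_measure_disjoint_family:
  fixes B :: "'i::countable \<Rightarrow> 'a set"
  assumes "finite_measure M" and B: "\<And>i. B i \<in> sets M" "disjoint_family B"
  shows "((\<lambda>i. measure M (B i)) has_sum measure M (\<Union>i. B i)) UNIV"
proof -
  interpret finite_measure M by fact
  define A where "A j = (if j \<in> range (to_nat :: 'i \<Rightarrow> nat) then B (from_nat j) else {})" for j
  have A_to_nat: "A (to_nat i) = B i" for i
    by (simp add: A_def)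
  have "range A \<subseteq> sets M" "disjoint_family A"
    using B by (auto simp: A_def disjoint_family_on_def) blast
  then have "(\<lambda>j. measure M (A j)) sums measure M (\<Union>j. A j)"
    by (rule finite_measure_UNION)
  moreover have "(\<Union>j. A j) = (\<Union>i. B i)"
  proof
    show "(\<Union>j. A j) \<subseteq> (\<Union>i. B i)"
      by (auto simp: A_def split: if_splits)
    show "(\<Union>i. B i) \<subseteq> (\<Union>j. A j)"
      unfolding A_to_nat[symmetric] by blast
  qed
  ultimately have "((\<lambda>j. measure M (A j)) has_sum measure M (\<Union>i. B i)) UNIV"
    by (simp add: sums_nonneg_imp_has_sum)
  then have "((\<lambda>j. measure M (A j)) has_sum measure M (\<Union>i. B i)) (range (to_nat :: 'i \<Rightarrow> nat))"
    by (subst has_sum_cong_neutral[where T = UNIV]) (auto simp: A_def)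
  then show ?thesis
    by (simp add: has_sum_reindex o_def A_to_nat)
qed

lemma sets_value_event:
  assumes "Y \<in> M \<rightarrow>\<^sub>M count_space UNIV"
  shows "{\<omega> \<in> space M. Y \<omega> = y} \<in> sets M"
  using measurable_sets[OF assms, of "{y}"] by (simp add: vimage_def Int_def conj_commute)

lemma has_sum_measure_value_events:
  fixes Y :: "'a \<Rightarrow> 'b::countable"
  assumes "prob_space M" and Y: "Y \<in> M \<rightarrow>\<^sub>M count_space UNIV"
  shows "((\<lambda>y. measure M {\<omega> \<in> space M. Y \<omega> = y}) has_sum 1) UNIV"
proof -
  interpret prob_space M by fact
  have "((\<lambda>y. measure M {\<omega> \<in> space M. Y \<omega> = y}) has_sum measure M (\<Union>y. {\<omega> \<in> space M. Y \<omega> = y})) UNIV"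
    using sets_value_event[of "\<lambda>_. Y"] Y
    by (intro has_sum_measure_disjoint_family) (auto simp: disjoint_family_on_def finite_measure_axioms)
  moreover have "(\<Union>y. {\<omega> \<in> space M. Y \<omega> = y}) = space M"
    by auto
  ultimately show ?thesis
    by (simp add: prob_space)
qed

lemma measure_law_below_averaged_law_le:
  fixes Y :: "nat \<Rightarrow> 'a \<Rightarrow> 'b::countable" and w :: "nat \<Rightarrow> real"
  assumes "prob_space M" and Y: "\<And>n. Y n \<in> M \<rightarrow>\<^sub>M count_space UNIV"
    and w: "summable w" "\<And>n. 0 \<le> w n"
  defines "\<mu> \<equiv> \<lambda>n y. measure M {\<omega> \<in> space M. Y n \<omega> = y}"
  shows "measure M {\<omega> \<in> space M. \<not> (0 < \<mu> n (Y n \<omega>) \<and> w n * (\<Sum>m. w m * \<mu> m (Y n \<omega>)) \<le> \<mu> n (Y n \<omega>))}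
    \<le> w n * suminf w"
proof -
  interpret prob_space M by fact
  define \<nu> where "\<nu> y = (\<Sum>m. w m * \<mu> m y)" for y
  define bad where "bad = {y. \<not> (0 < \<mu> n y \<and> w n * \<nu> y \<le> \<mu> n y)}"
  define B where "B y = (if y \<in> bad then {\<omega> \<in> space M. Y n \<omega> = y} else {})" for y
  have summable_w\<mu>: "summable (\<lambda>m. w m * \<mu> m y)" for y
    by (rule summable_comparison_test'[OF w(1), of 0]) (use w(2) in \<open>auto simp: \<mu>_def intro: mult_left_le\<close>)
  have \<nu>_nonneg: "0 \<le> \<nu> y" for y
    unfolding \<nu>_def by (rule suminf_nonneg[OF summable_w\<mu>]) (simp add: w(2) \<mu>_def)
  have "((\<lambda>y. measure M (B y)) has_sum measure M (\<Union>y. B y)) UNIV"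
    using sets_value_event[OF Y]
    by (intro has_sum_measure_disjoint_family) (auto simp: B_def disjoint_family_on_def finite_measure_axioms)
  moreover have "(\<Union>y. B y) = {\<omega> \<in> space M. Y n \<omega> \<in> bad}"
    by (auto simp: B_def split: if_splits)
  ultimately have "((\<lambda>y. measure M (B y)) has_sum measure M {\<omega> \<in> space M. Y n \<omega> \<in> bad}) UNIV"
    by simp
  moreover have "(\<Sum>y\<in>F. measure M (B y)) \<le> w n * suminf w" if "finite F" for F
  proof -
    have "(\<Sum>y\<in>F. measure M (B y)) \<le> (\<Sum>y\<in>F. w n * \<nu> y)"
      by (intro sum_mono)
        (auto simp: B_def bad_def \<mu>_def not_less intro: order_trans[OF _ mult_nonneg_nonneg[OF w(2) \<nu>_nonneg]])
    also have "\<dots> = w n * (\<Sum>m. \<Sum>y\<in>F. w m * \<mu> m y)"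
      by (subst suminf_sum[OF summable_w\<mu>]) (simp add: \<nu>_def sum_distrib_left)
    also have "\<dots> \<le> w n * suminf w"
    proof (intro mult_left_mono suminf_le)
      have law_le_1: "(\<Sum>y\<in>F. \<mu> m y) \<le> 1" for m
        using has_sum_mono'[OF has_sum_finite[OF that] has_sum_measure_value_events[OF assms(1) Y]]
        by (simp add: \<mu>_def)
      show "(\<Sum>y\<in>F. w m * \<mu> m y) \<le> w m" for m
        using mult_left_le[OF law_le_1 w(2)] by (simp add: sum_distrib_left)
    qed (use w summable_w\<mu> in \<open>auto intro: summable_sum\<close>)
    finally show ?thesis .
  qed
  ultimately have "measure M {\<omega> \<in> space M. Y n \<omega> \<in> bad} \<le> w n * suminf w"
    by (metis infsumI infsum_le_finite_sums has_sum_imp_summable)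
  then show ?thesis
    by (simp add: bad_def \<nu>_def)
qed

lemma AE_eventually_law_dominates_averaged_law:
  fixes Y :: "nat \<Rightarrow> 'a \<Rightarrow> 'b::countable" and w :: "nat \<Rightarrow> real"
  assumes "prob_space M" and Y: "\<And>n. Y n \<in> M \<rightarrow>\<^sub>M count_space UNIV"
    and w: "summable w" "\<And>n. 0 \<le> w n"
  defines "\<mu> \<equiv> \<lambda>n y. measure M {\<omega> \<in> space M. Y n \<omega> = y}"
  shows "AE \<omega> in M. eventually (\<lambda>n. 0 < \<mu> n (Y n \<omega>) \<and> w n * (\<Sum>m. w m * \<mu> m (Y n \<omega>)) \<le> \<mu> n (Y n \<omega>))
           sequentially"
proof -
  interpret prob_space M by fact
  define E where "E n = {\<omega> \<in> space M. \<not> (0 < \<mu> n (Y n \<omega>) \<and> w n * (\<Sum>m. w m * \<mu> m (Y n \<omega>)) \<le> \<mu> n (Y n \<omega>))}"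
    for n
  have "E n \<in> sets M" for n
    using measurable_sets[OF Y, of "{y. \<not> (0 < \<mu> n y \<and> w n * (\<Sum>m. w m * \<mu> m y) \<le> \<mu> n y)}" n]
    by (simp add: E_def vimage_def Int_def conj_commute)
  moreover have "summable (\<lambda>n. measure M (E n))"
    using measure_law_below_averaged_law_le[OF assms(1) Y w] unfolding E_def \<mu>_def
    by (intro summable_comparison_test'[OF summable_mult2[OF w(1), of "suminf w"], of 0]) simp
  ultimately have "AE \<omega> in M. eventually (\<lambda>n. \<omega> \<in> space M - E n) sequentially"
    by (intro borel_cantelli_AE1) (simp_all add: less_top[symmetric])
  then show ?thesis
    by eventually_elim (auto elim!: eventually_mono simp: E_def)
qed

section \<open>Analytic estimates\<close>

lemma eventually_le_powr_of_ext_ln_ratio: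
  fixes f :: "nat \<Rightarrow> real"
  assumes "((\<lambda>n. ext_ln (f n) / ereal (ln (real n))) \<longlongrightarrow> -\<infinity>) sequentially" and "0 \<le> B"
  shows "eventually (\<lambda>n. f n \<le> real (Suc n) powr - B) sequentially"
proof -
  have "eventually (\<lambda>n. ext_ln (f n) / ereal (ln (real n)) < ereal (- 2 * B) \<and> 2 \<le> n) sequentially"
    using assms(1) eventually_ge_at_top[of "2::nat"] unfolding tendsto_MInfty by (intro eventually_conj) auto
  then show ?thesis
  proof eventually_elim
    case (elim n)
    then have ln_n: "0 < ln (real n)"
      by simp
    show ?case
    proof (cases "f n \<le> 0")
      case False
      then have "ln (f n) < - 2 * B * ln (real n)"
        using elim ln_n by (simp add: ext_ln_def divide_less_eq)
      then have "f n < exp (- 2 * B * ln (real n))"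
        using False by (metis exp_less_cancel_iff exp_ln not_le)
      also have "\<dots> = real n powr (- 2 * B)"
        using elim by (simp add: powr_def)
      also have "\<dots> = (real n powr 2) powr - B"
        by (subst powr_powr) simp
      also have "\<dots> = (real n ^ 2) powr - B"
        by simp
      also have "\<dots> \<le> real (Suc n) powr - B"
      proof (rule powr_mono2')
        have "2 * n \<le> n * n"
          using elim by (intro mult_le_mono1) simp
        then have "Suc n \<le> n ^ 2"
          using elim unfolding power2_eq_square by linarith
        then show "real (Suc n) \<le> real n ^ 2"
          by (metis of_nat_le_iff of_nat_power)
      qed (use assms(2) in auto)
      finally show ?thesis by simp
    qed (use powr_ge_zero[of "real (Suc n)" "- B"] in linarith)
  qed
qed

lemma summable_Suc_power_mult:
  fixes f :: "nat \<Rightarrow> real"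
  assumes "\<And>n. 0 \<le> f n" and "eventually (\<lambda>n. f n \<le> real (Suc n) powr - (real k + 2)) sequentially"
  shows "summable (\<lambda>n. real (Suc n) ^ k * f n)"
proof (rule summable_comparison_test_ev)
  show "summable (\<lambda>n. real (Suc n) powr - 2)"
    using summable_real_powr_iff[of "-2"] summable_Suc_iff[of "\<lambda>n. real n powr - 2"] by simp
  show "eventually (\<lambda>n. norm (real (Suc n) ^ k * f n) \<le> real (Suc n) powr - 2) sequentially"
    using assms(2)
  proof eventually_elim
    case (elim n)
    have "real (Suc n) ^ k * f n \<le> real (Suc n) powr real k * real (Suc n) powr - (real k + 2)"
      using elim assms(1) by (simp add: powr_realpow mult_left_mono)
    also have "\<dots> = real (Suc n) powr - 2"
      by (simp add: powr_add[symmetric])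
    finally show ?case
      using assms(1) by simp
  qed
qed

lemma suminf_le_weighted_split:
  fixes a :: "nat \<Rightarrow> real" and x :: real
  assumes a: "\<And>m. 0 \<le> a m" and summable: "summable (\<lambda>m. real (Suc m) ^ k * a m)" and "0 < x"
  shows "(\<Sum>m. a m) \<le> x ^ 2 * (\<Sum>m. a m / real (Suc m) ^ 2) + (\<Sum>m. real (Suc m) ^ k * a m) / x ^ k"
proof -
  have a_le: "a m \<le> real (Suc m) ^ k * a m" and a_div_le: "a m / real (Suc m) ^ 2 \<le> a m" for m
    using a[of m] by (simp_all add: mult_le_cancel_right1 one_le_power divide_le_eq mult_le_cancel_left1)
  have summable_a: "summable a"
    by (rule summable_comparison_test'[OF summable, of 0]) (use a a_le in simp)
  have summable_div: "summable (\<lambda>m. a m / real (Suc m) ^ 2)"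
    by (rule summable_comparison_test'[OF summable_a, of 0]) (use a a_div_le in simp)
  have termwise: "a m \<le> x ^ 2 * (a m / real (Suc m) ^ 2) + real (Suc m) ^ k * a m / x ^ k" for m
  proof (cases "real (Suc m) \<le> x")
    case True
    then have "real (Suc m) ^ 2 \<le> x ^ 2"
      by (intro power_mono) auto
    then have "a m \<le> x ^ 2 * (a m / real (Suc m) ^ 2)"
      using a[of m] by (simp add: field_simps mult_left_mono)
    moreover have "0 \<le> real (Suc m) ^ k * a m / x ^ k"
      using a[of m] \<open>0 < x\<close> by simp
    ultimately show ?thesis by linarith
  next
    case False
    then have "x ^ k \<le> real (Suc m) ^ k"
      using \<open>0 < x\<close> by (intro power_mono) auto
    then have "a m \<le> real (Suc m) ^ k * a m / x ^ k"
      using a[of m] \<open>0 < x\<close> by (simp add: field_simps mult_left_mono)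
    moreover have "0 \<le> x ^ 2 * (a m / real (Suc m) ^ 2)"
      using a[of m] by simp
    ultimately show ?thesis by linarith
  qed
  have "(\<Sum>m. a m) \<le> (\<Sum>m. x ^ 2 * (a m / real (Suc m) ^ 2) + real (Suc m) ^ k * a m / x ^ k)"
    using termwise summable_a summable_div summable
    by (intro suminf_le summable_add summable_mult summable_divide) auto
  also have "\<dots> = (\<Sum>m. x ^ 2 * (a m / real (Suc m) ^ 2)) + (\<Sum>m. real (Suc m) ^ k * a m / x ^ k)"
    using summable_div summable by (intro suminf_add[symmetric] summable_mult summable_divide)
  also have "\<dots> = x ^ 2 * (\<Sum>m. a m / real (Suc m) ^ 2) + (\<Sum>m. real (Suc m) ^ k * a m) / x ^ k"
    using summable_div summable by (simp only: suminf_mult suminf_divide)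
  finally show ?thesis .
qed

lemma le_powr_of_weighted_split_bound:
  fixes p G H C N :: real and k :: nat
  assumes "0 < p" "2 \<le> N" "H \<le> N ^ 2 * p" "0 \<le> C" "C \<le> N"
    and split: "\<And>x. 0 < x \<Longrightarrow> G \<le> x ^ 2 * H + C / x ^ k"
  shows "G \<le> N ^ 3 * p powr (real k / (real k + 2))"
proof -
  define x where "x = p powr (- 1 / (real k + 2))"
  define P where "P = p powr (real k / (real k + 2))"
  \<comment> \<open>this choice of x makes both terms of the split bound proportional to P\<close>
  have "x ^ 2 * p = p powr (- 2 / (real k + 2)) * p powr 1"
    using \<open>0 < p\<close> by (simp add: x_def powr_powr flip: powr_realpow)
  also have "\<dots> = p powr (- 2 / (real k + 2) + 1)"
    by (rule powr_add[symmetric])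
  also have "- 2 / (real k + 2) + 1 = real k / (real k + 2)"
    by (simp add: field_simps)
  finally have x_p: "x ^ 2 * p = P"
    by (simp add: P_def)
  have "x ^ k = p powr (- (real k / (real k + 2)))"
    using \<open>0 < p\<close> by (simp add: x_def powr_powr flip: powr_realpow)
  then have C_x: "C / x ^ k = C * P"
    by (simp add: P_def powr_minus divide_inverse)
  have "N ^ 2 + C \<le> N ^ 3"
  proof -
    have "1 \<le> N * (N - 1)"
      using \<open>2 \<le> N\<close> mult_mono[of 1 N 1 "N - 1"] by simp
    then have "N \<le> N * N * (N - 1)"
      using \<open>2 \<le> N\<close> mult_left_mono[of 1 "N * (N - 1)" N] by (simp add: mult.assoc)
    then show ?thesis
      using \<open>C \<le> N\<close> by (simp add: algebra_simps power2_eq_square power3_eq_cube)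
  qed
  have "G \<le> x ^ 2 * (N ^ 2 * p) + C * P"
    using split[of x] \<open>H \<le> N ^ 2 * p\<close> C_x \<open>0 < p\<close>
    by (simp add: x_def mult_left_mono add_right_mono order_trans)
  also have "\<dots> = (N ^ 2 + C) * P"
    using x_p by (simp add: algebra_simps)
  also have "\<dots> \<le> N ^ 3 * P"
    using \<open>N ^ 2 + C \<le> N ^ 3\<close> by (rule mult_right_mono) (simp add: P_def)
  finally show ?thesis
    by (simp add: P_def)
qed

lemma ln_le_of_weighted_split_bound:
  fixes p G H C N :: real and k :: nat
  assumes "0 < k" and p: "0 < p" "p \<le> N powr - real k" and N: "2 \<le> N"
    and "H \<le> N ^ 2 * p" "0 \<le> C" "C \<le> N" "0 < G"
    and "\<And>x. 0 < x \<Longrightarrow> G \<le> x ^ 2 * H + C / x ^ k"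
  shows "ln G \<le> (1 - 5 / real k) * ln p"
proof -
  have "ln p \<le> ln (N powr - real k)"
    using p N by (subst ln_le_cancel_iff) auto
  then have ln_N: "real k * ln N \<le> - ln p"
    using N by (simp add: ln_powr)
  then have "ln p \<le> 0"
    using N \<open>0 < k\<close> by (smt (verit) ln_ge_zero mult_nonneg_nonneg of_nat_0_le_iff)
  have "ln G \<le> ln (N ^ 3 * p powr (real k / (real k + 2)))"
    using le_powr_of_weighted_split_bound[OF p(1) N assms(5,6,7,9)] \<open>0 < G\<close> by simp
  also have "\<dots> = 3 * ln N + real k / (real k + 2) * ln p"
    using N p by (simp add: ln_mult ln_realpow ln_powr)
  also have "\<dots> \<le> - 3 * ln p / real k + (1 - 2 / real k) * ln p"
  proof (rule add_mono)
    show "3 * ln N \<le> - 3 * ln p / real k"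
      using ln_N \<open>0 < k\<close> by (simp add: field_simps)
    have "1 - 2 / real k \<le> real k / (real k + 2)"
      using \<open>0 < k\<close> by (simp add: field_simps)
    then show "real k / (real k + 2) * ln p \<le> (1 - 2 / real k) * ln p"
      using \<open>ln p \<le> 0\<close> by (rule mult_right_mono_neg)
  qed
  also have "\<dots> = (1 - 5 / real k) * ln p"
    using \<open>0 < k\<close> by (simp add: field_simps)
  finally show ?thesis .
qed

lemma abs_ratio_sub_one_le:
  fixes L M :: real and k :: nat
  assumes "10 \<le> k" "L < 0" "L \<le> M" "M \<le> (1 - 5 / real k) * L"
  shows "\<bar>L / M - 1\<bar> \<le> 10 / real k"
proof -
  have b: "0 < 1 - 5 / real k"
    using assms(1) by (simp add: field_simps)
  then have "M < 0"
    using assms(2,4) by (smt (verit) mult_pos_neg)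
  then have "1 \<le> L / M" "L / M \<le> 1 / (1 - 5 / real k)"
    using assms(3,4) b by (simp_all add: le_divide_eq divide_le_eq mult.commute)
  moreover have "1 / (1 - 5 / real k) - 1 \<le> 10 / real k"
    using assms(1) by (simp add: field_simps)
  ultimately show ?thesis
    by linarith
qed

lemma abs_ln_ratio_suminf_sub_one_le:
  fixes a :: "nat \<Rightarrow> real" and k n :: nat
  assumes k: "10 \<le> k" and n: "1 \<le> n" and a: "\<And>m. 0 \<le> a m"
    and summable: "summable (\<lambda>m. real (Suc m) ^ k * a m)"
    and moment: "(\<Sum>m. real (Suc m) ^ k * a m) \<le> real (Suc n)"
    and a_n: "0 < a n" "a n \<le> real (Suc n) powr - real k"
    and average: "(\<Sum>m. a m / real (Suc m) ^ 2) \<le> real (Suc n) ^ 2 * a n"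
  shows "\<bar>ln (a n) / ln (\<Sum>m. a m) - 1\<bar> \<le> 10 / real k"
proof -
  have "a m \<le> real (Suc m) ^ k * a m" for m
    using a[of m] by (simp add: mult_le_cancel_right1 one_le_power)
  then have "summable a"
    by (intro summable_comparison_test'[OF summable, of 0]) (use a in simp)
  then have a_n_le: "a n \<le> (\<Sum>m. a m)"
    using sum_le_suminf[of a "{n}"] a by simp
  have "ln (\<Sum>m. a m) \<le> (1 - 5 / real k) * ln (a n)"
    using k n a_n a_n_le average moment a summable
    by (intro ln_le_of_weighted_split_bound[where N = "real (Suc n)"
          and H = "\<Sum>m. a m / real (Suc m) ^ 2" and C = "\<Sum>m. real (Suc m) ^ k * a m"]
        suminf_le_weighted_split)
      (auto intro: suminf_nonneg)
  moreover have "a n < 1"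
    using a_n powr_less_one[of "real (Suc n)" "- real k"] k n by simp
  then have "ln (a n) < 0"
    using a_n by (simp add: ln_less_zero)
  moreover have "ln (a n) \<le> ln (\<Sum>m. a m)"
    using a_n a_n_le by simp
  ultimately show ?thesis
    using k by (intro abs_ratio_sub_one_le)
qed

lemma eventually_ln_ratio_close_to_one:
  fixes q :: "nat \<Rightarrow> 'b \<Rightarrow> real" and f :: "nat \<Rightarrow> real" and e :: real
  assumes q: "\<And>m u. 0 \<le> q m u" "\<And>m u. q m u \<le> f m"
    and decay: "\<And>B. 0 \<le> B \<Longrightarrow> eventually (\<lambda>n. f n \<le> real (Suc n) powr - B) sequentially"
    and "0 < e"
  shows "eventually (\<lambda>n. \<forall>u. 0 < q n u \<and> (\<Sum>m. q m u / real (Suc m) ^ 2) \<le> real (Suc n) ^ 2 * q n u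
           \<longrightarrow> \<bar>ln (q n u) / ln (\<Sum>m. q m u) - 1\<bar> < e) sequentially"
proof -
  obtain k :: nat where k: "10 \<le> k" "10 / real k < e"
  proof
    define k where "k = nat \<lceil>10 / e\<rceil> + 10"
    show "10 \<le> k"
      by (simp add: k_def)
    have "10 / e < real k"
      unfolding k_def by linarith
    then show "10 / real k < e"
      using \<open>0 < e\<close> \<open>10 \<le> k\<close> by (simp add: pos_divide_less_eq mult.commute)
  qed
  define C where "C = (\<Sum>m. real (Suc m) ^ k * f m)"
  have "0 \<le> f m" for m
    using q(1)[of m undefined] q(2)[of m undefined] by linarith
  then have summable_C: "summable (\<lambda>m. real (Suc m) ^ k * f m)"
    using decay[of "real k + 2"] by (intro summable_Suc_power_mult) auto
  have "eventually (\<lambda>n. 1 \<le> n \<and> C \<le> real (Suc n)) sequentially"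
    using eventually_ge_at_top[of "nat \<lceil>C\<rceil> + 1"] by eventually_elim linarith
  then have "eventually (\<lambda>n. f n \<le> real (Suc n) powr - real k \<and> 1 \<le> n \<and> C \<le> real (Suc n)) sequentially"
    using decay[of "real k"] by (simp add: eventually_conj_iff)
  then show ?thesis
  proof (rule eventually_mono, intro allI impI)
    fix n u
    assume n: "f n \<le> real (Suc n) powr - real k \<and> 1 \<le> n \<and> C \<le> real (Suc n)"
      and good: "0 < q n u \<and> (\<Sum>m. q m u / real (Suc m) ^ 2) \<le> real (Suc n) ^ 2 * q n u"
    have summable_u: "summable (\<lambda>m. real (Suc m) ^ k * q m u)"
      by (rule summable_comparison_test'[OF summable_C, of 0]) (use q in \<open>simp add: mult_left_mono\<close>)
    have "(\<Sum>m. real (Suc m) ^ k * q m u) \<le> C"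
      unfolding C_def by (rule suminf_le[OF _ summable_u summable_C]) (simp add: mult_left_mono q(2))
    then have "\<bar>ln (q n u) / ln (\<Sum>m. q m u) - 1\<bar> \<le> 10 / real k"
      using k(1) n good q(1) q(2)[of n u] summable_u
      by (intro abs_ln_ratio_suminf_sub_one_le) auto
    then show "\<bar>ln (q n u) / ln (\<Sum>m. q m u) - 1\<bar> < e"
      using k(2) by linarith
  qed
qed

section \<open>Transition probabilities of the network\<close>

lemma trans_prob_nonneg:
  assumes "network_with_killing c K"
  shows "0 \<le> trans_prob c K x y"
proof -
  have "0 \<le> tot_cond c u" for u
    using assms unfolding network_with_killing_def tot_cond_def by (auto intro: infsum_nonneg)
  then show ?thesis
    using assms unfolding network_with_killing_def trans_prob_def
    by (auto split: option.split intro!: divide_nonneg_nonneg)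
qed

lemma trans_prob_has_sum:
  assumes "network_with_killing c K"
  shows "(trans_prob c K x has_sum 1) UNIV"
proof (cases x)
  case None
  show ?thesis
    by (rule has_sum_finite_neutralI[of "{None}"]) (auto simp: None trans_prob_def)
next
  case (Some u)
  define D where "D = tot_cond c u + K u"
  have "D > 0" "c u summable_on UNIV"
    using assms unfolding network_with_killing_def D_def tot_cond_def by auto
  then have "((\<lambda>v. c u v / D) has_sum tot_cond c u / D) UNIV"
    unfolding tot_cond_def by (intro has_sum_divide_const) simp
  then have "(trans_prob c K x has_sum tot_cond c u / D) (range Some)"
    by (subst has_sum_reindex) (auto simp: Some trans_prob_def D_def o_def)
  then have "(trans_prob c K x has_sum (trans_prob c K x None + tot_cond c u / D)) (insert None (range Some))"
    by (intro has_sum_insert) auto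
  moreover have "insert None (range Some) = UNIV"
    by (auto intro: option.exhaust)
  moreover have "trans_prob c K x None + tot_cond c u / D = 1"
    using \<open>D > 0\<close> by (simp add: Some trans_prob_def D_def add_divide_distrib[symmetric] add.commute)
  ultimately show ?thesis by metis
qed

lemma pn_nonneg_le_1:
  assumes "network_with_killing c K"
  shows "0 \<le> pn c K n x y \<and> pn c K n x y \<le> 1"
proof (induction n arbitrary: x)
  case (Suc n)
  have P: "trans_prob c K x summable_on UNIV" "(\<Sum>\<^sub>\<infinity>z. trans_prob c K x z) = 1"
    "\<And>z. 0 \<le> trans_prob c K x z"
    using trans_prob_has_sum trans_prob_nonneg assms infsumI by (blast intro: has_sum_imp_summable)+
  have "(\<lambda>z. trans_prob c K x z * pn c K n z y) summable_on UNIV"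
    by (rule summable_on_comparison_test[OF P(1)]) (use P(3) Suc in \<open>auto intro: mult_left_le\<close>)
  then have "(\<Sum>\<^sub>\<infinity>z. trans_prob c K x z * pn c K n z y) \<le> (\<Sum>\<^sub>\<infinity>z. trans_prob c K x z)"
    by (rule infsum_mono[OF _ P(1)]) (use P(3) Suc in \<open>auto intro: mult_left_le\<close>)
  moreover have "0 \<le> (\<Sum>\<^sub>\<infinity>z. trans_prob c K x z * pn c K n z y)"
    using P(3) Suc by (intro infsum_nonneg) simp
  ultimately show ?case using P(2) by simp
qed simp

lemma pn_nonneg: "network_with_killing c K \<Longrightarrow> 0 \<le> pn c K n x y"
  using pn_nonneg_le_1 by blast

lemma pn_le_1: "network_with_killing c K \<Longrightarrow> pn c K n x y \<le> 1"
  using pn_nonneg_le_1 by blast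

lemma pn_Suc_has_sum:
  assumes "network_with_killing c K"
  shows "((\<lambda>z. trans_prob c K x z * pn c K n z y) has_sum pn c K (Suc n) x y) UNIV"
proof -
  have "trans_prob c K x summable_on UNIV"
    using trans_prob_has_sum assms by (blast intro: has_sum_imp_summable)
  then have "(\<lambda>z. trans_prob c K x z * pn c K n z y) summable_on UNIV"
    by (rule summable_on_comparison_test)
      (use trans_prob_nonneg[OF assms] pn_nonneg[OF assms] pn_le_1[OF assms]
        in \<open>auto intro: mult_left_le\<close>)
  then show ?thesis by simp
qed

lemma pn_None_Some: "pn c K n None (Some v) = 0"
proof (induction n)
  case (Suc n)
  then have "(\<lambda>z. trans_prob c K None z * pn c K n z (Some v)) = (\<lambda>_. 0)"
    by (auto simp: trans_prob_def)
  then show ?case by simp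
qed simp

lemma pn_Suc_has_sum_right:
  assumes nk: "network_with_killing c K"
  shows "((\<lambda>z. pn c K n x z * trans_prob c K z y) has_sum pn c K (Suc n) x y) UNIV"
proof (induction n arbitrary: x)
  case 0
  have "((\<lambda>z. trans_prob c K x z * pn c K 0 z y) has_sum trans_prob c K x y) UNIV"
    by (rule has_sum_finite_neutralI[of "{y}"]) auto
  then have "pn c K (Suc 0) x y = trans_prob c K x y"
    using infsumI by simp
  then show ?case
    by (intro has_sum_finite_neutralI[of "{x}"]) auto
next
  case (Suc n)
  define P where "P = trans_prob c K"
  define F where "F = (\<lambda>(w, z). P x w * (pn c K n w z * P z y))"
  have row: "((\<lambda>z. F (w, z)) has_sum P x w * pn c K (Suc n) w y) UNIV" for w
    unfolding F_def P_def using has_sum_cmult_right[OF Suc] by simp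
  have col: "(\<Sum>\<^sub>\<infinity>w. F (w, z)) = pn c K (Suc n) x z * P z y" for z
    unfolding F_def P_def using infsum_cmult_left'[of "\<lambda>w. P x w * pn c K n w z" "P z y" UNIV]
    by (simp add: mult.assoc P_def)
  have F: "F summable_on UNIV \<times> UNIV"
  proof (rule summable_on_SigmaI[OF row])
    show "(\<lambda>w. P x w * pn c K (Suc n) w y) summable_on UNIV"
      using pn_Suc_has_sum[OF nk] unfolding P_def summable_on_def by blast
  qed (use trans_prob_nonneg[OF nk] pn_nonneg[OF nk] in \<open>simp add: F_def P_def\<close>)
  have "(\<lambda>(z, w). F (w, z)) summable_on UNIV \<times> UNIV"
    using F summable_on_swap[of F UNIV UNIV] by simp
  then have "(\<lambda>z. \<Sum>\<^sub>\<infinity>w. F (w, z)) summable_on UNIV"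
    using summable_on_Sigma_banach[of "\<lambda>z w. F (w, z)" UNIV "\<lambda>_. UNIV"] by simp
  then have summable: "(\<lambda>z. pn c K (Suc n) x z * P z y) summable_on UNIV"
    by (simp add: col)
  have "(\<Sum>\<^sub>\<infinity>z. \<Sum>\<^sub>\<infinity>w. F (w, z)) = (\<Sum>\<^sub>\<infinity>w. \<Sum>\<^sub>\<infinity>z. F (w, z))"
    by (rule infsum_swap_banach[symmetric]) (use F in \<open>simp add: case_prod_unfold\<close>)
  then have "(\<Sum>\<^sub>\<infinity>z. pn c K (Suc n) x z * P z y) = pn c K (Suc (Suc n)) x y"
    by (simp add: col infsumI[OF row] P_def)
  then show ?case
    using has_sum_infsum[OF summable] by (simp add: P_def)
qed

lemma pn_reversible:
  assumes nk: "network_with_killing c K"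
  shows "(tot_cond c u + K u) * pn c K n (Some u) (Some v)
       = (tot_cond c v + K v) * pn c K n (Some v) (Some u)"
proof (induction n arbitrary: u v)
  case (Suc n)
  define \<pi> where "\<pi> = (\<lambda>u. tot_cond c u + K u)"
  define P where "P = trans_prob c K"
  have detailed_balance: "\<pi> a * P (Some a) (Some b) = c a b" for a b
  proof -
    have "0 < \<pi> a"
      using assms unfolding network_with_killing_def \<pi>_def tot_cond_def by auto
    then show ?thesis by (simp add: P_def trans_prob_def \<pi>_def)
  qed
  have step: "\<pi> u * (P (Some u) z * pn c K n z (Some v)) = \<pi> v * (pn c K n (Some v) z * P z (Some u))" for z
  proof (cases z)
    case (Some w)
    have "\<pi> u * (P (Some u) z * pn c K n z (Some v)) = c w u * pn c K n (Some w) (Some v)"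
      using detailed_balance[of u w] assms Some unfolding network_with_killing_def
      by (simp add: mult.assoc[symmetric])
    also have "\<dots> = P (Some w) (Some u) * (\<pi> w * pn c K n (Some w) (Some v))"
      using detailed_balance[of w u] by (simp add: ac_simps)
    also have "\<dots> = P (Some w) (Some u) * (\<pi> v * pn c K n (Some v) (Some w))"
      using Suc[of w v] by (simp add: \<pi>_def)
    finally show ?thesis using Some by (simp add: ac_simps)
  qed (simp add: P_def trans_prob_def pn_None_Some)
  have "\<pi> u * pn c K (Suc n) (Some u) (Some v) = (\<Sum>\<^sub>\<infinity>z. \<pi> u * (P (Some u) z * pn c K n z (Some v)))"
    by (simp add: P_def infsum_cmult_right')
  also have "\<dots> = \<pi> v * (\<Sum>\<^sub>\<infinity>z. pn c K n (Some v) z * P z (Some u))"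
    by (simp add: step infsum_cmult_right')
  also have "\<dots> = \<pi> v * pn c K (Suc n) (Some v) (Some u)"
    using infsumI[OF pn_Suc_has_sum_right[OF nk]] by (simp add: P_def)
  finally show ?case by (simp add: \<pi>_def)
qed simp

section \<open>The random walk\<close>

definition cylinder :: "'a measure \<Rightarrow> (nat \<Rightarrow> 'a \<Rightarrow> 'b) \<Rightarrow> 'b list \<Rightarrow> 'a set" where
  "cylinder M X xs = {\<omega> \<in> space M. \<forall>i<length xs. X i \<omega> = xs ! i}"

lemma sets_cylinder_Int_value_event:
  assumes [measurable]: "\<And>i. X i \<in> M \<rightarrow>\<^sub>M count_space UNIV"
  shows "cylinder M X xs \<inter> {\<omega>. X n \<omega> = y} \<in> sets M"
proof -
  have "cylinder M X xs \<inter> {\<omega>. X n \<omega> = y} = {\<omega> \<in> space M. (\<forall>i<length xs. X i \<omega> = xs ! i) \<and> X n \<omega> = y}"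
    by (auto simp: cylinder_def)
  then show ?thesis by simp
qed

lemma random_walk_prob_space: "is_random_walk c K r M X \<Longrightarrow> prob_space M"
  unfolding is_random_walk_def by blast

lemma random_walk_measurable: "is_random_walk c K r M X \<Longrightarrow> X n \<in> M \<rightarrow>\<^sub>M count_space UNIV"
  unfolding is_random_walk_def by blast

lemma random_walk_measure_cylinder:
  assumes "is_random_walk c K r M X"
  shows "measure M (cylinder M X (xs @ [x]))
       = (if (xs @ [x]) ! 0 = Some r then 1 else 0) * (\<Prod>i<length xs. trans_prob c K ((xs @ [x]) ! i) ((xs @ [x]) ! Suc i))"
proof -
  have "cylinder M X (xs @ [x]) = {\<omega> \<in> space M. \<forall>i\<le>length xs. X i \<omega> = (xs @ [x]) ! i}"
    by (auto simp: cylinder_def less_Suc_eq_le)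
  then show ?thesis
    using assms unfolding is_random_walk_def by simp
qed

lemma random_walk_measure_cylinder_snoc:
  assumes "is_random_walk c K r M X"
  shows "measure M (cylinder M X (xs @ [x, z])) = measure M (cylinder M X (xs @ [x])) * trans_prob c K x z"
proof -
  have "(\<Prod>i<length xs. trans_prob c K ((xs @ [x, z]) ! i) ((xs @ [x, z]) ! Suc i))
      = (\<Prod>i<length xs. trans_prob c K ((xs @ [x]) ! i) ((xs @ [x]) ! Suc i))"
    by (rule prod.cong) (auto simp: nth_append)
  then show ?thesis
    using random_walk_measure_cylinder[OF assms, of "xs @ [x]" z] random_walk_measure_cylinder[OF assms, of xs x]
    by (simp add: nth_append)
qed

lemma random_walk_cylinder_pn:
  fixes c :: "'v::countable \<Rightarrow> 'v \<Rightarrow> real"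
  assumes nk: "network_with_killing c K" and rw: "is_random_walk c K r M X"
  shows "measure M (cylinder M X (xs @ [x]) \<inter> {\<omega>. X (length xs + n) \<omega> = y})
       = measure M (cylinder M X (xs @ [x])) * pn c K n x y"
proof (induction n arbitrary: xs x)
  case 0
  have "cylinder M X (xs @ [x]) \<inter> {\<omega>. X (length xs) \<omega> = y} = (if x = y then cylinder M X (xs @ [x]) else {})"
    by (auto simp: cylinder_def nth_append)
  then show ?case by simp
next
  case (Suc n)
  interpret prob_space M
    using rw by (rule random_walk_prob_space)
  define B where "B z = cylinder M X (xs @ [x, z]) \<inter> {\<omega>. X (length (xs @ [x]) + n) \<omega> = y}" for z
  have "cylinder M X (xs @ [x]) \<inter> {\<omega>. X (length xs + Suc n) \<omega> = y} = (\<Union>z. B z)"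
    by (auto simp: B_def cylinder_def nth_append less_Suc_eq)
  moreover have "((\<lambda>z. measure M (B z)) has_sum measure M (\<Union>z. B z)) UNIV"
  proof (rule has_sum_measure_disjoint_family)
    show "B z \<in> sets M" for z
      unfolding B_def by (rule sets_cylinder_Int_value_event[OF random_walk_measurable[OF rw]])
    show "disjoint_family B"
      by (auto simp: B_def cylinder_def disjoint_family_on_def nth_append)
  qed (rule finite_measure_axioms)
  moreover have "measure M (B z) = measure M (cylinder M X (xs @ [x])) * (trans_prob c K x z * pn c K n z y)" for z
    using Suc.IH[of "xs @ [x]" z] random_walk_measure_cylinder_snoc[OF rw] by (simp add: B_def)
  ultimately have "((\<lambda>z. measure M (cylinder M X (xs @ [x])) * (trans_prob c K x z * pn c K n z y))
      has_sum measure M (cylinder M X (xs @ [x]) \<inter> {\<omega>. X (length xs + Suc n) \<omega> = y})) UNIV"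
    by simp
  from infsumI[OF this] show ?case
    by (simp add: infsum_cmult_right')
qed

lemma random_walk_AE_start:
  assumes "is_random_walk c K r M X"
  shows "AE \<omega> in M. X 0 \<omega> = Some r"
proof -
  interpret prob_space M
    using assms by (rule random_walk_prob_space)
  have "prob (cylinder M X [Some r]) = 1"
    using random_walk_measure_cylinder[OF assms, of "[]"] by simp
  then show ?thesis
    by (auto dest: AE_prob_1 simp: cylinder_def)
qed

lemma random_walk_distribution:
  fixes c :: "'v::countable \<Rightarrow> 'v \<Rightarrow> real"
  assumes nk: "network_with_killing c K" and rw: "is_random_walk c K r M X"
  shows "measure M {\<omega> \<in> space M. X n \<omega> = y} = pn c K n (Some r) y"
proof -
  interpret prob_space M
    using rw by (rule random_walk_prob_space)
  have "measure M {\<omega> \<in> space M. X n \<omega> = y} = measure M (cylinder M X [Some r] \<inter> {\<omega>. X n \<omega> = y})"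
  proof (rule measure_eq_AE)
    show "AE \<omega> in M. (\<omega> \<in> {\<omega> \<in> space M. X n \<omega> = y}) = (\<omega> \<in> cylinder M X [Some r] \<inter> {\<omega>. X n \<omega> = y})"
      using random_walk_AE_start[OF rw] by eventually_elim (auto simp: cylinder_def)
    show "{\<omega> \<in> space M. X n \<omega> = y} \<in> sets M"
      by (rule sets_value_event[OF random_walk_measurable[OF rw]])
    show "cylinder M X [Some r] \<inter> {\<omega>. X n \<omega> = y} \<in> sets M"
      by (rule sets_cylinder_Int_value_event[OF random_walk_measurable[OF rw]])
  qed
  also have "\<dots> = pn c K n (Some r) y"
    using random_walk_cylinder_pn[OF nk rw, of "[]"] random_walk_measure_cylinder[OF rw, of "[]"] by simp
  finally show ?thesis .
qed

lemma random_walk_distribution_reversed: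
  fixes c :: "'v::countable \<Rightarrow> 'v \<Rightarrow> real"
  assumes nk: "network_with_killing c K" and rw: "is_random_walk c K r M X"
  shows "measure M {\<omega> \<in> space M. X n \<omega> = Some u}
       = (tot_cond c u + K u) / (tot_cond c r + K r) * pn c K n (Some u) (Some r)"
proof -
  have "0 < tot_cond c r + K r"
    using nk unfolding network_with_killing_def tot_cond_def by auto
  then show ?thesis
    using random_walk_distribution[OF nk rw] pn_reversible[OF nk, of r n u] by (simp add: field_simps)
qed

lemma AE_eventually_return_prob_dominates_average:
  fixes c :: "'v::countable \<Rightarrow> 'v \<Rightarrow> real"
  assumes nk: "network_with_killing c K" and rw: "is_random_walk c K r M X"
  shows "AE \<omega> in M. eventually (\<lambda>n. \<forall>u. X n \<omega> = Some u \<longrightarrow>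
           0 < pn c K n (Some u) (Some r) \<and>
           (\<Sum>m. pn c K m (Some u) (Some r) / real (Suc m) ^ 2) \<le> real (Suc n) ^ 2 * pn c K n (Some u) (Some r))
         sequentially"
proof -
  define q where "q m u = pn c K m (Some u) (Some r)" for m u
  define \<rho> where "\<rho> u = (tot_cond c u + K u) / (tot_cond c r + K r)" for u
  define w :: "nat \<Rightarrow> real" where "w m = 1 / real (Suc m) ^ 2" for m
  have \<rho>_pos: "0 < \<rho> u" for u
    using nk unfolding network_with_killing_def \<rho>_def tot_cond_def by auto
  have summable_w: "summable w"
    using summable_real_powr_iff[of "-2"] summable_Suc_iff[of "\<lambda>n. real n powr - 2"]
    unfolding w_def by (simp add: powr_minus divide_inverse)
  have law: "measure M {\<omega> \<in> space M. X m \<omega> = Some u} = \<rho> u * q m u" for m u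
    unfolding \<rho>_def q_def by (rule random_walk_distribution_reversed[OF nk rw])
  have averaged_law: "(\<Sum>m. w m * (\<rho> u * q m u)) = \<rho> u * (\<Sum>m. q m u / real (Suc m) ^ 2)" for u
  proof -
    have "summable (\<lambda>m. q m u / real (Suc m) ^ 2)"
      by (rule summable_comparison_test'[OF summable_w, of 0])
        (use pn_nonneg[OF nk] pn_le_1[OF nk] in \<open>simp add: w_def q_def divide_right_mono\<close>)
    from suminf_mult[OF this, of "\<rho> u"] show ?thesis
      by (simp add: w_def field_simps)
  qed
  have "AE \<omega> in M. eventually (\<lambda>n. 0 < measure M {\<omega>' \<in> space M. X n \<omega>' = X n \<omega>} \<and>
      w n * (\<Sum>m. w m * measure M {\<omega>' \<in> space M. X m \<omega>' = X n \<omega>}) \<le> measure M {\<omega>' \<in> space M. X n \<omega>' = X n \<omega>})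
      sequentially"
    using random_walk_prob_space[OF rw] random_walk_measurable[OF rw] summable_w
    by (rule AE_eventually_law_dominates_averaged_law) (simp add: w_def)
  then show ?thesis
  proof (elim AE_mp, intro AE_I2 impI, elim eventually_mono, intro allI impI)
    fix \<omega> n u
    assume "X n \<omega> = Some u"
      and "0 < measure M {\<omega>' \<in> space M. X n \<omega>' = X n \<omega>} \<and>
        w n * (\<Sum>m. w m * measure M {\<omega>' \<in> space M. X m \<omega>' = X n \<omega>}) \<le> measure M {\<omega>' \<in> space M. X n \<omega>' = X n \<omega>}"
    then have "0 < \<rho> u * q n u" and "w n * (\<rho> u * (\<Sum>m. q m u / real (Suc m) ^ 2)) \<le> \<rho> u * q n u"
      by (simp_all only: averaged_law law)
    then have "0 < q n u" and "w n * (\<Sum>m. q m u / real (Suc m) ^ 2) \<le> q n u"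
      using \<rho>_pos[of u] by (simp_all add: zero_less_mult_iff mult.left_commute[of "w n"])
    then show "0 < pn c K n (Some u) (Some r) \<and>
        (\<Sum>m. pn c K m (Some u) (Some r) / real (Suc m) ^ 2) \<le> real (Suc n) ^ 2 * pn c K n (Some u) (Some r)"
      by (simp add: q_def w_def field_simps)
  qed
qed

theorem proposition3p2:
  fixes c :: "'v::countable \<Rightarrow> 'v \<Rightarrow> real" and K :: "'v \<Rightarrow> real" and r :: 'v
    and M :: "'a measure" and X :: "nat \<Rightarrow> 'a \<Rightarrow> 'v option"
  assumes "network_with_killing c K"
    and "is_random_walk c K r M X"
    and "((\<lambda>n. ext_ln (SUP u. pn c K n (Some u) (Some r)) / ereal (ln (real n)))
            \<longlongrightarrow> -\<infinity>) sequentially"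
  shows "AE \<omega> in M. ((\<lambda>n. case X n \<omega> of
                              None \<Rightarrow> 1
                            | Some u \<Rightarrow> ln (pn c K n (Some u) (X 0 \<omega>)) / ln (green c K (Some u) (X 0 \<omega>)))
                      \<longlongrightarrow> 1) sequentially"
proof -
  define q where "q m u = pn c K m (Some u) (Some r)" for m u
  have q_nonneg: "0 \<le> q m u" and q_le_sup: "q m u \<le> (SUP u. q m u)" for m u
    using pn_nonneg_le_1[OF assms(1)] by (auto simp: q_def intro!: cSUP_upper bdd_aboveI)
  have decay: "eventually (\<lambda>n. (SUP u. q n u) \<le> real (Suc n) powr - B) sequentially" if "0 \<le> B" for B
    using eventually_le_powr_of_ext_ln_ratio[OF assms(3) that] by (simp add: q_def)
  from random_walk_AE_start[OF assms(2)] AE_eventually_return_prob_dominates_average[OF assms(1,2)]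
  show ?thesis
  proof eventually_elim
    case (elim \<omega>)
    show ?case
    proof (rule tendstoI)
      fix e :: real
      assume "0 < e"
      have "eventually (\<lambda>n. \<forall>u. 0 < q n u \<and> (\<Sum>m. q m u / real (Suc m) ^ 2) \<le> real (Suc n) ^ 2 * q n u
          \<longrightarrow> \<bar>ln (q n u) / ln (\<Sum>m. q m u) - 1\<bar> < e) sequentially"
        using q_nonneg q_le_sup decay \<open>0 < e\<close> by (rule eventually_ln_ratio_close_to_one)
      with elim(2) show "eventually (\<lambda>n. dist (case X n \<omega> of None \<Rightarrow> 1
          | Some u \<Rightarrow> ln (pn c K n (Some u) (X 0 \<omega>)) / ln (green c K (Some u) (X 0 \<omega>))) 1 < e) sequentially"
        by eventually_elim (use elim(1) \<open>0 < e\<close> in \<open>auto simp: q_def green_def dist_real_def split: option.split\<close>)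
    qed
  qed
qed

end
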